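(* Let $f\in\mathbb{R}^{d_1\times\cdots\times d_m}$, $f\ge0$, be weakly irreducible and $1<p_1,\ldots,p_m<\infty$ such that there is $i\in[m]$ with $(m-1)p_i'\le p_k$ for every $k\in[m]\setminus\{i\}$. Define $\mu:\mathcal S^{d-d_i}_{++}\times\mathcal S^{d-d_i}_{++}\to\mathbb{R}$ by $$\mu(\mathbf x,\mathbf y)=\ln\Bigg(\prod_{l\in[m]\setminus\{i\}}\frac{\max_{j_l\in[d_l]}(x_{l,j_l}/y_{l,j_l})^{p_l-1}}{\min_{j_l\in[d_l]}(x_{l,j_l}/y_{l,j_l})^{p_l-1}}\Bigg)$$ and $G:\mathcal S^{d-d_i}_{++}\to\mathcal S^{d-d_i}_{++}$ by $G(\mathbf x)=\big(s_{i,k}(\mathbf x)/\|s_{i,k}(\mathbf x)\|_{p_k}\big)_{k\in[m]\setminus\{i\}}$. Then $\mu(G(\mathbf x),G(\mathbf y))\le\mu(\mathbf x,\mathbf y)$ for all $\mathbf x,\mathbf y\in\mathcal S^{d-d_i}_{++}$.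
   Context: $f$ is identified with the multilinear form $f(\mathbf x)=\sum f_{j_1,\ldots,j_m}x_{1,j_1}\cdots x_{m,j_m}$; $\nabla_kf(\mathbf x)$ is the vector of partials $\partial f/\partial x_{k,j_k}$ (independent of $\mathbf x_k$, so $\nabla_if$ is defined on $\mathcal R^{d-d_i}=\prod_{k\ne i}\mathbb{R}^{d_k}$). $p'=p/(p-1)$; $\psi_q(\mathbf y)_j=|y_j|^{q-1}\mathrm{sign}(y_j)$. $\mathcal S^{d-d_i}_{++}=\{\mathbf x\in\mathcal R^{d-d_i}:\mathbf x>0,\|\mathbf x_k\|_{p_k}=1\ \forall k\ne i\}$. For $k\ne i$, $s_{i,k}(\mathbf x)=\psi_{p_k'}\big(\nabla_kf(\mathbf x_1,\ldots,\mathbf x_{i-1},\psi_{p_i'}(\nabla_if(\mathbf x)),\mathbf x_{i+1},\ldots,\mathbf x_m)\big)$ (entrywise positive for $\mathbf x>0$ under weak irreducibility). Weak irreducibility: the undirected graph on $\bigcup_k\{k\}\times[d_k]$ with $(k,j_k)\sim(l,j_l)$ ($k\ne l$) iff $f_{j_1,\ldots,j_m}>0$ for some choice of the remaining indices, is connected. *)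

theory Defs
  imports Complex_Main "HOL-Library.FuncSet"
begin

text \<open>Conventions: modes are indexed by 0..m-1, entries of mode k by 0..d k - 1.
 A tensor is a function from index tuples (nat => nat) to reals; only the tuples in
 tidx m d matter. A point of a product of spaces R^{d_k} is a function x :: nat => nat => real,
 with x k j the j-th entry of the k-th block.\<close>

definition tidx :: "nat \<Rightarrow> (nat \<Rightarrow> nat) \<Rightarrow> (nat \<Rightarrow> nat) set" where
  "tidx m d = PiE {..<m} (\<lambda>k. {..<d k})"

definition conj_exp :: "real \<Rightarrow> real" where
  "conj_exp p = p / (p - 1)"

definition psi :: "real \<Rightarrow> (nat \<Rightarrow> real) \<Rightarrow> (nat \<Rightarrow> real)" where
  "psi q y = (\<lambda>j. \<bar>y j\<bar> powr (q - 1) * sgn (y j))"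

definition pnorm :: "real \<Rightarrow> nat \<Rightarrow> (nat \<Rightarrow> real) \<Rightarrow> real" where
  "pnorm p n v = (\<Sum>j<n. \<bar>v j\<bar> powr p) powr (1 / p)"

text \<open>Partial gradient of the multilinear form with respect to block k (independent of x k).\<close>
definition grad :: "nat \<Rightarrow> (nat \<Rightarrow> nat) \<Rightarrow> ((nat \<Rightarrow> nat) \<Rightarrow> real) \<Rightarrow> nat
    \<Rightarrow> (nat \<Rightarrow> nat \<Rightarrow> real) \<Rightarrow> (nat \<Rightarrow> real)" where
  "grad m d f k x = (\<lambda>a. \<Sum>J\<in>{J\<in>tidx m d. J k = a}. f J * (\<Prod>l\<in>{..<m}-{k}. x l (J l)))"

definition weakly_irreducible :: "nat \<Rightarrow> (nat \<Rightarrow> nat) \<Rightarrow> ((nat \<Rightarrow> nat) \<Rightarrow> real) \<Rightarrow> bool" where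
  "weakly_irreducible m d f \<longleftrightarrow>
     (let V = {(k, a). k < m \<and> a < d k};
          E = {((k, a), (l, b)). (k, a) \<in> V \<and> (l, b) \<in> V \<and> k \<noteq> l \<and>
                 (\<exists>J\<in>tidx m d. J k = a \<and> J l = b \<and> f J > 0)}
      in \<forall>u\<in>V. \<forall>v\<in>V. (u, v) \<in> E\<^sup>*)"

text \<open>s_{i,k}(x); the i-th block of x is irrelevant (it is overwritten).\<close>
definition s_map :: "nat \<Rightarrow> (nat \<Rightarrow> nat) \<Rightarrow> ((nat \<Rightarrow> nat) \<Rightarrow> real) \<Rightarrow> (nat \<Rightarrow> real)
    \<Rightarrow> nat \<Rightarrow> nat \<Rightarrow> (nat \<Rightarrow> nat \<Rightarrow> real) \<Rightarrow> (nat \<Rightarrow> real)" where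
  "s_map m d f p i k x =
     psi (conj_exp (p k)) (grad m d f k (x(i := psi (conj_exp (p i)) (grad m d f i x))))"

definition S_pp :: "nat \<Rightarrow> (nat \<Rightarrow> nat) \<Rightarrow> (nat \<Rightarrow> real) \<Rightarrow> nat \<Rightarrow> (nat \<Rightarrow> nat \<Rightarrow> real) set" where
  "S_pp m d p i = {x. \<forall>k<m. k \<noteq> i \<longrightarrow> (\<forall>j<d k. x k j > 0) \<and> pnorm (p k) (d k) (x k) = 1}"

definition G_map :: "nat \<Rightarrow> (nat \<Rightarrow> nat) \<Rightarrow> ((nat \<Rightarrow> nat) \<Rightarrow> real) \<Rightarrow> (nat \<Rightarrow> real)
    \<Rightarrow> nat \<Rightarrow> (nat \<Rightarrow> nat \<Rightarrow> real) \<Rightarrow> (nat \<Rightarrow> nat \<Rightarrow> real)" where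
  "G_map m d f p i x = (\<lambda>k j. s_map m d f p i k x j / pnorm (p k) (d k) (s_map m d f p i k x))"

definition mu :: "nat \<Rightarrow> (nat \<Rightarrow> nat) \<Rightarrow> (nat \<Rightarrow> real) \<Rightarrow> nat
    \<Rightarrow> (nat \<Rightarrow> nat \<Rightarrow> real) \<Rightarrow> (nat \<Rightarrow> nat \<Rightarrow> real) \<Rightarrow> real" where
  "mu m d p i x y = ln (\<Prod>l\<in>{..<m}-{i}.
      Max ((\<lambda>j. (x l j / y l j) powr (p l - 1)) ` {..<d l}) /
      Min ((\<lambda>j. (x l j / y l j) powr (p l - 1)) ` {..<d l}))"

end

theory Submission
  imports Defs
begin

(* Write delta(u, v) = ln (max_j (u_j / v_j) / min_j (u_j / v_j)) for Hilbert's projective metric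
   on positive vectors; then mu(x, y) is the weighted sum of the delta(x_l, y_l) with weights p_l - 1.
   Sandwiching each block x_l between multiples of y_l shows that the nonnegative multilinear
   gradient contracts delta: delta(grad_k f x, grad_k f y) <= sum over l <> k of delta(x_l, y_l).
   The map psi_{q'} raises entries to the power 1/(q - 1), which scales delta by that factor, and
   normalisation does not change delta. Applying this first to block i and then to block k gives
   (p_k - 1) delta(G_k x, G_k y) <= p_i' S - delta(x_k, y_k) with S the sum of all delta(x_l, y_l),
   and summing over k, the hypothesis (m - 1) p_i' <= p_k turns the total into a bound by mu(x, y).
   Weak irreducibility is only needed to keep all gradients entrywise positive. *)

definition hilbert_metric :: "nat \<Rightarrow> (nat \<Rightarrow> real) \<Rightarrow> (nat \<Rightarrow> real) \<Rightarrow> real" where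
  "hilbert_metric n u v = ln (Max ((\<lambda>j. u j / v j) ` {..<n}) / Min ((\<lambda>j. u j / v j) ` {..<n}))"

lemma Min_le_Max:
  fixes A :: "'a::linorder set"
  assumes "finite A" "A \<noteq> {}"
  shows "Min A \<le> Max A"
  using assms by (meson Max_ge Min_in order_trans Min_le)

lemma Max_div_Min_powr:
  fixes A :: "real set"
  assumes A: "finite A" "A \<noteq> {}" "\<forall>r\<in>A. 0 < r" and q: "0 \<le> q"
  shows "Max ((\<lambda>r. r powr q) ` A) / Min ((\<lambda>r. r powr q) ` A) = (Max A / Min A) powr q"
proof -
  \<comment> \<open>\<open>powr\<close> is monotone only on nonnegative reals\<close>
  define g where "g r = max 0 r powr q" for r :: real
  have "mono g"
    unfolding g_def by (rule monoI) (use q in \<open>auto intro: powr_mono2\<close>)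
  have img: "(\<lambda>r. r powr q) ` A = g ` A"
    using A(3) unfolding g_def by (intro image_cong) auto
  have "0 < Min A" "0 < Max A" using A Max_in[OF A(1,2)] Min_in[OF A(1,2)] by simp_all
  then have "g (Max A) = Max A powr q" "g (Min A) = Min A powr q" by (simp_all add: g_def)
  then show ?thesis
    unfolding img mono_Max_commute[OF \<open>mono g\<close> A(1,2), symmetric]
      mono_Min_commute[OF \<open>mono g\<close> A(1,2), symmetric]
    by (simp add: powr_divide)
qed

lemma Max_div_Min_scale:
  fixes A :: "real set"
  assumes "finite A" "A \<noteq> {}" "0 < c"
  shows "Max ((\<lambda>r. c * r) ` A) / Min ((\<lambda>r. c * r) ` A) = Max A / Min A"
proof -
  have "mono (\<lambda>r. c * r)" using assms(3) by (intro monoI) simp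
  then show ?thesis
    using assms by (simp add: mono_Max_commute[symmetric] mono_Min_commute[symmetric])
qed

lemma hilbert_metric_cong:
  "(\<And>j. j < n \<Longrightarrow> u j = u' j) \<Longrightarrow> (\<And>j. j < n \<Longrightarrow> v j = v' j) \<Longrightarrow>
    hilbert_metric n u v = hilbert_metric n u' v'"
  unfolding hilbert_metric_def by (intro arg_cong[where f = ln] arg_cong2[where f = "(/)"]
      arg_cong[where f = Max] arg_cong[where f = Min] image_cong) auto

lemma ln_Max_div_Min_ratio_powr:
  assumes "0 < n" "\<forall>j<n. 0 < u j" "\<forall>j<n. 0 < v j" "0 < q"
  shows "0 < Max ((\<lambda>j. (u j / v j) powr q) ` {..<n}) / Min ((\<lambda>j. (u j / v j) powr q) ` {..<n})"
    and "ln (Max ((\<lambda>j. (u j / v j) powr q) ` {..<n}) / Min ((\<lambda>j. (u j / v j) powr q) ` {..<n}))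
           = q * hilbert_metric n u v"
proof -
  let ?R = "(\<lambda>j. u j / v j) ` {..<n}"
  have R: "finite ?R" "?R \<noteq> {}" "\<forall>r\<in>?R. 0 < r" using assms by auto
  have eq: "(\<lambda>j. (u j / v j) powr q) ` {..<n} = (\<lambda>r. r powr q) ` ?R" by (simp add: image_image)
  have pos: "0 < Max ?R" "0 < Min ?R"
    using R(3) Max_in[OF R(1,2)] Min_in[OF R(1,2)] by blast+
  show "0 < Max ((\<lambda>j. (u j / v j) powr q) ` {..<n}) / Min ((\<lambda>j. (u j / v j) powr q) ` {..<n})"
    unfolding eq Max_div_Min_powr[OF R less_imp_le[OF assms(4)]] using pos by simp
  show "ln (Max ((\<lambda>j. (u j / v j) powr q) ` {..<n}) / Min ((\<lambda>j. (u j / v j) powr q) ` {..<n}))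
           = q * hilbert_metric n u v"
    unfolding eq Max_div_Min_powr[OF R less_imp_le[OF assms(4)]] hilbert_metric_def
    using pos by (simp add: ln_powr)
qed

lemma hilbert_metric_powr:
  assumes "0 < n" "\<forall>j<n. 0 < u j" "\<forall>j<n. 0 < v j" "0 < q"
  shows "hilbert_metric n (\<lambda>j. u j powr q) (\<lambda>j. v j powr q) = q * hilbert_metric n u v"
  using ln_Max_div_Min_ratio_powr(2)[OF assms] by (simp add: hilbert_metric_def powr_divide)

lemma hilbert_metric_scale:
  assumes "0 < n" "0 < c" "0 < c'"
  shows "hilbert_metric n (\<lambda>j. u j / c) (\<lambda>j. v j / c') = hilbert_metric n u v"
proof -
  let ?R = "(\<lambda>j. u j / v j) ` {..<n}"
  have eq: "(\<lambda>j. (u j / c) / (v j / c')) ` {..<n} = (\<lambda>r. (c' / c) * r) ` ?R"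
    unfolding image_image using assms by (intro image_cong) simp_all
  have "Max ((\<lambda>r. (c' / c) * r) ` ?R) / Min ((\<lambda>r. (c' / c) * r) ` ?R) = Max ?R / Min ?R"
    by (rule Max_div_Min_scale) (use assms in auto)
  then show ?thesis
    unfolding hilbert_metric_def eq by (simp only:)
qed

lemma hilbert_metric_Min_Max:
  assumes "0 < n" "\<forall>j<n. 0 < u j" "\<forall>j<n. 0 < v j"
  shows "0 < Min ((\<lambda>j. u j / v j) ` {..<n})"
    and "\<forall>j<n. Min ((\<lambda>j. u j / v j) ` {..<n}) * v j \<le> u j \<and> u j \<le> Max ((\<lambda>j. u j / v j) ` {..<n}) * v j"
    and "hilbert_metric n u v = ln (Max ((\<lambda>j. u j / v j) ` {..<n})) - ln (Min ((\<lambda>j. u j / v j) ` {..<n}))"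
proof -
  let ?R = "(\<lambda>j. u j / v j) ` {..<n}"
  have R: "finite ?R" "?R \<noteq> {}" using assms by auto
  show Min: "0 < Min ?R" using assms R by (simp add: Min_gr_iff)
  have "Min ?R \<le> Max ?R" using R by (rule Min_le_Max)
  then show "hilbert_metric n u v = ln (Max ?R) - ln (Min ?R)"
    unfolding hilbert_metric_def using Min by (simp add: ln_div)
  show "\<forall>j<n. Min ?R * v j \<le> u j \<and> u j \<le> Max ?R * v j"
  proof (intro allI impI)
    fix j assume "j < n"
    then have "Min ?R \<le> u j / v j" "u j / v j \<le> Max ?R" "0 < v j" using R assms(3) by auto
    then show "Min ?R * v j \<le> u j \<and> u j \<le> Max ?R * v j"
      by (simp add: pos_le_divide_eq pos_divide_le_eq)
  qed
qed

lemma hilbert_metric_le: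
  assumes "0 < n" "\<forall>j<n. 0 < v j" "0 < lo" "\<forall>j<n. lo * v j \<le> u j \<and> u j \<le> hi * v j"
  shows "hilbert_metric n u v \<le> ln hi - ln lo"
proof -
  let ?R = "(\<lambda>j. u j / v j) ` {..<n}"
  have R: "finite ?R" "?R \<noteq> {}" using assms by auto
  have bounds: "lo \<le> r \<and> r \<le> hi" if "r \<in> ?R" for r
    using that assms by (auto simp: pos_le_divide_eq pos_divide_le_eq)
  have "lo \<le> Min ?R" "Max ?R \<le> hi" "Min ?R \<le> Max ?R"
    using R bounds by (simp_all add: Min_le_Max)
  with assms(3) have "ln (Max ?R) \<le> ln hi" "ln lo \<le> ln (Min ?R)" "0 < Min ?R" "0 < Max ?R"
    by simp_all
  then show ?thesis
    unfolding hilbert_metric_def by (simp add: ln_div)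
qed

lemma hilbert_metric_nonneg:
  assumes "0 < n" "\<forall>j<n. 0 < u j" "\<forall>j<n. 0 < v j"
  shows "0 \<le> hilbert_metric n u v"
proof -
  let ?R = "(\<lambda>j. u j / v j) ` {..<n}"
  have "Min ?R \<le> Max ?R" by (rule Min_le_Max) (use assms in auto)
  moreover have "0 < Min ?R" by (rule hilbert_metric_Min_Max(1)[OF assms])
  ultimately have "ln (Min ?R) \<le> ln (Max ?R)" by simp
  then show ?thesis unfolding hilbert_metric_Min_Max(3)[OF assms] by simp
qed

lemma finite_tidx: "finite (tidx m d)"
  unfolding tidx_def by (rule finite_PiE) auto

lemma tidx_less: "J \<in> tidx m d \<Longrightarrow> l < m \<Longrightarrow> J l < d l"
  unfolding tidx_def by (auto simp: PiE_def Pi_def)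

lemma prod_sandwich:
  fixes lo hi u v :: "'a \<Rightarrow> real"
  assumes "\<forall>l\<in>K. 0 \<le> lo l \<and> 0 \<le> v l \<and> lo l * v l \<le> u l \<and> u l \<le> hi l * v l"
  shows "prod lo K * prod v K \<le> prod u K \<and> prod u K \<le> prod hi K * prod v K"
proof
  show "prod lo K * prod v K \<le> prod u K"
    unfolding prod.distrib[symmetric] using assms by (intro prod_mono) simp
  show "prod u K \<le> prod hi K * prod v K"
    unfolding prod.distrib[symmetric] using assms
    by (intro prod_mono) (auto intro: order_trans[OF mult_nonneg_nonneg])
qed

lemma grad_sandwich:
  assumes f: "\<forall>J\<in>tidx m d. 0 \<le> f J"
    and bnd: "\<forall>l\<in>{..<m}-{k}. 0 \<le> lo l \<and> (\<forall>j<d l. 0 \<le> y l j \<and> lo l * y l j \<le> x l j \<and> x l j \<le> hi l * y l j)"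
  shows "prod lo ({..<m}-{k}) * grad m d f k y a \<le> grad m d f k x a \<and>
         grad m d f k x a \<le> prod hi ({..<m}-{k}) * grad m d f k y a"
proof -
  let ?K = "{..<m}-{k}" and ?A = "{J\<in>tidx m d. J k = a}"
  have summand: "f J * (prod lo ?K * (\<Prod>l\<in>?K. y l (J l))) \<le> f J * (\<Prod>l\<in>?K. x l (J l)) \<and>
      f J * (\<Prod>l\<in>?K. x l (J l)) \<le> f J * (prod hi ?K * (\<Prod>l\<in>?K. y l (J l)))" if "J \<in> ?A" for J
  proof -
    have "\<forall>l\<in>?K. J l < d l" using that tidx_less by auto
    then have "prod lo ?K * (\<Prod>l\<in>?K. y l (J l)) \<le> (\<Prod>l\<in>?K. x l (J l)) \<and>
        (\<Prod>l\<in>?K. x l (J l)) \<le> prod hi ?K * (\<Prod>l\<in>?K. y l (J l))"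
      using bnd by (intro prod_sandwich) simp
    moreover have "0 \<le> f J" using that f by simp
    ultimately show ?thesis by (simp add: mult_left_mono)
  qed
  show ?thesis
    unfolding grad_def sum_distrib_left
    using sum_mono[of ?A, OF conjunct1[OF summand]] sum_mono[of ?A, OF conjunct2[OF summand]]
    by (simp add: mult.left_commute)
qed

lemma weakly_irreducible_witness:
  assumes irr: "weakly_irreducible m d f" and dpos: "\<forall>k<m. 0 < d k"
    and m2: "2 \<le> m" and k: "k < m" and a: "a < d k"
  shows "\<exists>J\<in>tidx m d. J k = a \<and> 0 < f J"
proof -
  define l where "l = (if k = 0 then 1 else (0::nat))"
  have l: "l < m" "l \<noteq> k" using m2 k by (auto simp: l_def)
  define V where "V = {(k, a). k < m \<and> a < d k}"
  define E where "E = {((k, a), (l, b)). (k, a) \<in> V \<and> (l, b) \<in> V \<and> k \<noteq> l \<and>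
                 (\<exists>J\<in>tidx m d. J k = a \<and> J l = b \<and> f J > 0)}"
  have "\<forall>u\<in>V. \<forall>v\<in>V. (u, v) \<in> E\<^sup>*" using irr
    unfolding weakly_irreducible_def Let_def V_def E_def by simp
  moreover have "(k, a) \<in> V" "(l, 0) \<in> V" using k a l dpos unfolding V_def by auto
  ultimately have "((k, a), (l, 0)) \<in> E\<^sup>*" by blast
  \<comment> \<open>the first edge of a path from \<open>(k, a)\<close> into another mode supplies \<open>J\<close>\<close>
  then show ?thesis
  proof (rule converse_rtranclE)
    assume "(k, a) = (l, 0)" then show ?thesis using l by simp
  next
    fix w assume "((k, a), w) \<in> E"
    then show ?thesis unfolding E_def by auto
  qed
qed

lemma grad_pos:
  assumes irr: "weakly_irreducible m d f" and dpos: "\<forall>k<m. 0 < d k"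
    and f: "\<forall>J\<in>tidx m d. 0 \<le> f J" and m2: "2 \<le> m" and k: "k < m" and a: "a < d k"
    and x: "\<forall>l<m. l \<noteq> k \<longrightarrow> (\<forall>j<d l. 0 < x l j)"
  shows "0 < grad m d f k x a"
proof -
  obtain J where J: "J \<in> tidx m d" "J k = a" "0 < f J"
    using weakly_irreducible_witness[OF irr dpos m2 k a] by blast
  have "0 \<le> f J' * (\<Prod>l\<in>{..<m}-{k}. x l (J' l))" if "J' \<in> tidx m d" for J'
    using that f x tidx_less[OF that] by (auto intro!: mult_nonneg_nonneg prod_nonneg simp: less_imp_le)
  moreover have "0 < f J * (\<Prod>l\<in>{..<m}-{k}. x l (J l))"
    using J x tidx_less[OF J(1)] by (auto intro!: mult_pos_pos prod_pos)
  ultimately show ?thesis unfolding grad_def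
    by (intro sum_pos2[where i=J]) (use J finite_tidx in auto)
qed

lemma hilbert_metric_grad_le:
  assumes f: "\<forall>J\<in>tidx m d. 0 \<le> f J" and dpos: "\<forall>l<m. 0 < d l" and k: "k < m"
    and x: "\<forall>l<m. l \<noteq> k \<longrightarrow> (\<forall>j<d l. 0 < x l j)"
    and y: "\<forall>l<m. l \<noteq> k \<longrightarrow> (\<forall>j<d l. 0 < y l j)"
    and grad_y: "\<forall>j<d k. 0 < grad m d f k y j"
  shows "hilbert_metric (d k) (grad m d f k x) (grad m d f k y)
           \<le> (\<Sum>l\<in>{..<m}-{k}. hilbert_metric (d l) (x l) (y l))"
proof -
  let ?K = "{..<m}-{k}"
  define lo where "lo l = Min ((\<lambda>j. x l j / y l j) ` {..<d l})" for l
  define hi where "hi l = Max ((\<lambda>j. x l j / y l j) ` {..<d l})" for l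
  have block: "0 < lo l \<and> (\<forall>j<d l. lo l * y l j \<le> x l j \<and> x l j \<le> hi l * y l j) \<and>
      hilbert_metric (d l) (x l) (y l) = ln (hi l) - ln (lo l)" if "l \<in> ?K" for l
    using hilbert_metric_Min_Max[of "d l" "x l" "y l"] that dpos x y unfolding lo_def hi_def by auto
  have hi_pos: "0 < hi l" if "l \<in> ?K" for l
  proof -
    have "lo l \<le> hi l" unfolding lo_def hi_def by (rule Min_le_Max) (use that dpos in auto)
    with block[OF that] show ?thesis by linarith
  qed
  have "\<forall>j<d k. prod lo ?K * grad m d f k y j \<le> grad m d f k x j \<and>
      grad m d f k x j \<le> prod hi ?K * grad m d f k y j"
    using block y by (intro allI impI grad_sandwich[OF f]) (auto intro: less_imp_le)
  then have "hilbert_metric (d k) (grad m d f k x) (grad m d f k y) \<le> ln (prod hi ?K) - ln (prod lo ?K)"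
    using block dpos k grad_y by (intro hilbert_metric_le) (auto intro: prod_pos)
  also have "\<dots> = (\<Sum>l\<in>?K. ln (hi l) - ln (lo l))"
  proof -
    have "ln (prod hi ?K) = (\<Sum>l\<in>?K. ln (hi l))" "ln (prod lo ?K) = (\<Sum>l\<in>?K. ln (lo l))"
      using block hi_pos by (intro ln_prod; force)+
    then show ?thesis by (simp add: sum_subtractf)
  qed
  also have "\<dots> = (\<Sum>l\<in>?K. hilbert_metric (d l) (x l) (y l))"
    using block by simp
  finally show ?thesis .
qed

lemma psi_eq_powr: "0 < y j \<Longrightarrow> psi q y j = y j powr (q - 1)"
  unfolding psi_def by simp

lemma conj_exp_minus_one: "1 < p \<Longrightarrow> conj_exp p - 1 = 1 / (p - 1)"
  unfolding conj_exp_def by (simp add: field_simps)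

lemma pnorm_pos:
  assumes "0 < n" "\<forall>j<n. 0 < v j"
  shows "0 < pnorm p n v"
proof -
  have "0 < (\<Sum>j<n. \<bar>v j\<bar> powr p)"
    using assms by (intro sum_pos) (auto simp: less_imp_neq[symmetric])
  then show ?thesis unfolding pnorm_def by simp
qed

lemma mu_eq_sum_hilbert_metric:
  assumes dpos: "\<forall>l<m. 0 < d l" and p: "\<forall>l<m. l \<noteq> i \<longrightarrow> 1 < p l"
    and x: "\<forall>l<m. l \<noteq> i \<longrightarrow> (\<forall>j<d l. 0 < x l j)"
    and y: "\<forall>l<m. l \<noteq> i \<longrightarrow> (\<forall>j<d l. 0 < y l j)"
  shows "mu m d p i x y = (\<Sum>l\<in>{..<m}-{i}. (p l - 1) * hilbert_metric (d l) (x l) (y l))"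
proof -
  have block: "0 < Max ((\<lambda>j. (x l j / y l j) powr (p l - 1)) ` {..<d l}) /
      Min ((\<lambda>j. (x l j / y l j) powr (p l - 1)) ` {..<d l}) \<and>
    ln (Max ((\<lambda>j. (x l j / y l j) powr (p l - 1)) ` {..<d l}) /
      Min ((\<lambda>j. (x l j / y l j) powr (p l - 1)) ` {..<d l})) =
    (p l - 1) * hilbert_metric (d l) (x l) (y l)" if "l \<in> {..<m}-{i}" for l
    using ln_Max_div_Min_ratio_powr[of "d l" "x l" "y l" "p l - 1"] that dpos p x y by auto
  then show ?thesis
    unfolding mu_def by (subst ln_prod) (force intro: sum.cong)+
qed

lemma sum_scaled_total_minus_le:
  fixes h w :: "'a \<Rightarrow> real"
  assumes "finite K" "\<forall>l\<in>K. 0 \<le> h l" "\<forall>l\<in>K. real (card K) * c \<le> w l + 1"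
  shows "(\<Sum>k\<in>K. c * sum h K - h k) \<le> (\<Sum>l\<in>K. w l * h l)"
proof -
  have "(\<Sum>k\<in>K. c * sum h K - h k) = (real (card K) * c - 1) * sum h K"
    by (simp add: sum_subtractf algebra_simps)
  also have "\<dots> = (\<Sum>l\<in>K. (real (card K) * c - 1) * h l)"
    by (rule sum_distrib_left)
  also have "\<dots> \<le> (\<Sum>l\<in>K. w l * h l)"
    using assms by (intro sum_mono mult_right_mono) auto
  finally show ?thesis .
qed

context
  fixes m :: nat and d :: "nat \<Rightarrow> nat" and f :: "(nat \<Rightarrow> nat) \<Rightarrow> real"
  assumes dpos: "\<forall>k<m. 0 < d k" and fnonneg: "\<forall>J\<in>tidx m d. 0 \<le> f J"
    and irr: "weakly_irreducible m d f" and two_le_m: "2 \<le> m"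
begin

lemma psi_grad_pos:
  assumes "k < m" "\<forall>l<m. l \<noteq> k \<longrightarrow> (\<forall>j<d l. 0 < x l j)"
  shows "\<forall>j<d k. 0 < psi q (grad m d f k x) j"
proof (intro allI impI)
  fix j assume "j < d k"
  then have "0 < grad m d f k x j" by (rule grad_pos[OF irr dpos fnonneg two_le_m assms(1) _ assms(2)])
  then show "0 < psi q (grad m d f k x) j" by (simp add: psi_eq_powr)
qed

lemma hilbert_metric_psi_grad_le:
  assumes k: "k < m" and q: "1 < q"
    and x: "\<forall>l<m. l \<noteq> k \<longrightarrow> (\<forall>j<d l. 0 < x l j)"
    and y: "\<forall>l<m. l \<noteq> k \<longrightarrow> (\<forall>j<d l. 0 < y l j)"
  shows "(q - 1) * hilbert_metric (d k) (psi (conj_exp q) (grad m d f k x)) (psi (conj_exp q) (grad m d f k y))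
           \<le> (\<Sum>l\<in>{..<m}-{k}. hilbert_metric (d l) (x l) (y l))"
proof -
  let ?gx = "grad m d f k x" and ?gy = "grad m d f k y"
  have gx: "\<forall>j<d k. 0 < ?gx j" and gy: "\<forall>j<d k. 0 < ?gy j"
    using grad_pos[OF irr dpos fnonneg two_le_m k] x y by auto
  have "hilbert_metric (d k) (psi (conj_exp q) ?gx) (psi (conj_exp q) ?gy)
      = hilbert_metric (d k) (\<lambda>j. ?gx j powr (1 / (q - 1))) (\<lambda>j. ?gy j powr (1 / (q - 1)))"
    using gx gy by (intro hilbert_metric_cong) (simp_all add: psi_eq_powr conj_exp_minus_one[OF q])
  also have "\<dots> = 1 / (q - 1) * hilbert_metric (d k) ?gx ?gy"
    using gx gy dpos k q by (intro hilbert_metric_powr) auto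
  finally have "(q - 1) * hilbert_metric (d k) (psi (conj_exp q) ?gx) (psi (conj_exp q) ?gy)
      = hilbert_metric (d k) ?gx ?gy" using q by simp
  also have "\<dots> \<le> (\<Sum>l\<in>{..<m}-{k}. hilbert_metric (d l) (x l) (y l))"
    by (rule hilbert_metric_grad_le[OF fnonneg dpos k x y gy])
  finally show ?thesis .
qed

lemma s_map_pos:
  assumes i: "i < m" and k: "k < m" and x: "\<forall>l<m. l \<noteq> i \<longrightarrow> (\<forall>j<d l. 0 < x l j)"
  shows "\<forall>j<d k. 0 < s_map m d f p i k x j"
proof -
  have "\<forall>l<m. l \<noteq> k \<longrightarrow> (\<forall>j<d l. 0 < (x(i := psi (conj_exp (p i)) (grad m d f i x))) l j)"
    using x psi_grad_pos[OF i x] by auto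
  then show ?thesis unfolding s_map_def by (rule psi_grad_pos[OF k])
qed

lemma hilbert_metric_s_map_le:
  assumes p: "\<forall>l<m. 1 < p l" and i: "i < m" and k: "k < m" "k \<noteq> i"
    and x: "\<forall>l<m. l \<noteq> i \<longrightarrow> (\<forall>j<d l. 0 < x l j)"
    and y: "\<forall>l<m. l \<noteq> i \<longrightarrow> (\<forall>j<d l. 0 < y l j)"
  shows "(p k - 1) * hilbert_metric (d k) (s_map m d f p i k x) (s_map m d f p i k y)
           \<le> conj_exp (p i) * (\<Sum>l\<in>{..<m}-{i}. hilbert_metric (d l) (x l) (y l))
             - hilbert_metric (d k) (x k) (y k)"
proof -
  define H where "H l = hilbert_metric (d l) (x l) (y l)" for l
  define ux where "ux = psi (conj_exp (p i)) (grad m d f i x)"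
  define uy where "uy = psi (conj_exp (p i)) (grad m d f i y)"
  let ?x' = "x(i := ux)" and ?y' = "y(i := uy)"
  have "(p i - 1) * hilbert_metric (d i) ux uy \<le> sum H ({..<m}-{i})"
    unfolding ux_def uy_def H_def using p i x y by (intro hilbert_metric_psi_grad_le) auto
  then have u: "hilbert_metric (d i) ux uy \<le> (conj_exp (p i) - 1) * sum H ({..<m}-{i})"
    using p i by (simp add: conj_exp_minus_one field_simps)
  have "\<forall>l<m. l \<noteq> k \<longrightarrow> (\<forall>j<d l. 0 < ?x' l j)" "\<forall>l<m. l \<noteq> k \<longrightarrow> (\<forall>j<d l. 0 < ?y' l j)"
    unfolding ux_def uy_def using x y psi_grad_pos[OF i x] psi_grad_pos[OF i y] by auto
  then have "(p k - 1) * hilbert_metric (d k) (s_map m d f p i k x) (s_map m d f p i k y)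
      \<le> (\<Sum>l\<in>{..<m}-{k}. hilbert_metric (d l) (?x' l) (?y' l))"
    unfolding s_map_def ux_def uy_def using p k by (intro hilbert_metric_psi_grad_le) auto
  also have "\<dots> = hilbert_metric (d i) ux uy + (\<Sum>l\<in>{..<m}-{i}-{k}. H l)"
  proof -
    have "{..<m}-{k} = insert i ({..<m}-{i}-{k})" using i k by auto
    then show ?thesis unfolding H_def by (simp add: sum.insert_remove)
  qed
  also have "(\<Sum>l\<in>{..<m}-{i}-{k}. H l) = sum H ({..<m}-{i}) - H k"
    using k by (simp add: sum_diff1)
  finally show ?thesis
    using u unfolding H_def by (simp add: algebra_simps)
qed

lemma hilbert_metric_G_map_le:
  assumes p: "\<forall>l<m. 1 < p l" and i: "i < m" and k: "k < m" "k \<noteq> i"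
    and x: "\<forall>l<m. l \<noteq> i \<longrightarrow> (\<forall>j<d l. 0 < x l j)"
    and y: "\<forall>l<m. l \<noteq> i \<longrightarrow> (\<forall>j<d l. 0 < y l j)"
  shows "(p k - 1) * hilbert_metric (d k) (G_map m d f p i x k) (G_map m d f p i y k)
           \<le> conj_exp (p i) * (\<Sum>l\<in>{..<m}-{i}. hilbert_metric (d l) (x l) (y l))
             - hilbert_metric (d k) (x k) (y k)"
proof -
  have "0 < pnorm (p k) (d k) (s_map m d f p i k x)" "0 < pnorm (p k) (d k) (s_map m d f p i k y)"
    using pnorm_pos s_map_pos[OF i k(1)] x y dpos k by auto
  then have "hilbert_metric (d k) (G_map m d f p i x k) (G_map m d f p i y k)
      = hilbert_metric (d k) (s_map m d f p i k x) (s_map m d f p i k y)"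
    unfolding G_map_def using dpos k by (intro hilbert_metric_scale) auto
  then show ?thesis using hilbert_metric_s_map_le[OF assms] by simp
qed

lemma G_map_pos:
  assumes i: "i < m" and k: "k < m" and x: "\<forall>l<m. l \<noteq> i \<longrightarrow> (\<forall>j<d l. 0 < x l j)"
  shows "\<forall>j<d k. 0 < G_map m d f p i x k j"
  using s_map_pos[OF i k x] pnorm_pos[of "d k" "s_map m d f p i k x"] dpos k
  unfolding G_map_def by auto

end

theorem proposition9:
  fixes m :: nat and d :: "nat \<Rightarrow> nat" and f :: "(nat \<Rightarrow> nat) \<Rightarrow> real"
    and p :: "nat \<Rightarrow> real" and i :: nat
  assumes dpos: "\<forall>k<m. 0 < d k"
    and fnonneg: "\<forall>J\<in>tidx m d. 0 \<le> f J"
    and irr: "weakly_irreducible m d f"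
    and prange: "\<forall>k<m. 1 < p k"
    and i: "i < m"
    and pcond: "\<forall>k<m. k \<noteq> i \<longrightarrow> (real m - 1) * conj_exp (p i) \<le> p k"
  shows "\<forall>x\<in>S_pp m d p i. \<forall>y\<in>S_pp m d p i.
           mu m d p i (G_map m d f p i x) (G_map m d f p i y) \<le> mu m d p i x y"
proof (intro ballI)
  fix x y assume "x \<in> S_pp m d p i" "y \<in> S_pp m d p i"
  then have x: "\<forall>l<m. l \<noteq> i \<longrightarrow> (\<forall>j<d l. 0 < x l j)" and y: "\<forall>l<m. l \<noteq> i \<longrightarrow> (\<forall>j<d l. 0 < y l j)"
    unfolding S_pp_def by auto
  let ?K = "{..<m}-{i}" and ?H = "\<lambda>l. hilbert_metric (d l) (x l) (y l)"
  show "mu m d p i (G_map m d f p i x) (G_map m d f p i y) \<le> mu m d p i x y"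
  proof (cases "m = 1")
    case True
    with i have "?K = {}" by auto
    then show ?thesis unfolding mu_def by (simp only: prod.empty)
  next
    case False
    with i have m2: "2 \<le> m" by linarith
    note G_pos = G_map_pos[OF dpos fnonneg irr m2 i]
    note G_contract = hilbert_metric_G_map_le[OF dpos fnonneg irr m2 prange i]
    have "mu m d p i (G_map m d f p i x) (G_map m d f p i y)
        = (\<Sum>k\<in>?K. (p k - 1) * hilbert_metric (d k) (G_map m d f p i x k) (G_map m d f p i y k))"
      using prange x y G_pos by (intro mu_eq_sum_hilbert_metric[OF dpos]) auto
    also have "\<dots> \<le> (\<Sum>k\<in>?K. conj_exp (p i) * sum ?H ?K - ?H k)"
      using G_contract x y by (intro sum_mono) auto
    also have "\<dots> \<le> (\<Sum>l\<in>?K. (p l - 1) * ?H l)"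
      using pcond i dpos x y
      by (intro sum_scaled_total_minus_le hilbert_metric_nonneg ballI) auto
    also have "\<dots> = mu m d p i x y"
      using prange x y by (intro mu_eq_sum_hilbert_metric[OF dpos, symmetric]) auto
    finally show ?thesis .
  qed
qed

end
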